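(* Let Assumptions A1, A2 and A3 hold. Let the maximal iteration number $T\in\mathbb{N}$ satisfy $T\le\frac{1}{2\eta\gamma^2\varepsilon^2}$, and let the step size satisfy $0<\eta\le\frac{1}{\beta^2\gamma^2}$. Assume the radius $R$ in A3 satisfies $$R\ge2\|r_0\|\max\Big(\eta\gamma\beta\big(1+2\eta\gamma^2(\varepsilon_0^2+\beta\varepsilon)T\big),\ \sqrt T\big(\sqrt\eta+\eta\gamma\sqrt T(\varepsilon+\varepsilon_0+\eta\gamma^2\beta(\varepsilon_0^2+\varepsilon\beta)T)\big)\Big).$$ Then for all $\tau\le T$: $$\|\theta_\tau-\theta_0\|\le\tfrac R2,$$ $$\|\tilde r_\tau-r_\tau\|\le2\eta\gamma^2(\varepsilon_0^2+\beta\varepsilon)\,\tau\,\|r_0\|,$$ $$\|\tilde\theta_\tau-\theta_\tau\|\le\eta\gamma\big(\varepsilon+\varepsilon_0+\eta\gamma^2\beta(\varepsilon_0^2+\varepsilon\beta)\tau\big)\tau\|r_0\|.$$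
   Context: Norms: $\|\cdot\|$ is the Euclidean norm for vectors and the spectral norm for matrices. Setting. Let $f:\mathbb{R}^N\to\mathbb{R}^n$ be continuously differentiable with Jacobian $\mathcal{J}(\theta)\in\mathbb{R}^{n\times N}$. Let $A\in\mathbb{R}^{m\times n}$ and let $\gamma\ge\|A\|$. Fix $y\in\mathbb{R}^m$, a starting point $\theta_0\in\mathbb{R}^N$, and a fixed deterministic "reference Jacobian" $J\in\mathbb{R}^{n\times N}$. Iterations. Gradient descent with step size $\eta>0$ is applied to $\mathcal{L}(\theta)=\frac12\|Af(\theta)-y\|^2$ and to $\mathcal{L}_{\rm lin}(\theta)=\frac12\|Af(\theta_0)+AJ(\theta-\theta_0)-y\|^2$, both started at $\theta_0=\tilde\theta_0$: $$\theta_{\tau+1}=\theta_\tau-\eta\mathcal{J}(\theta_\tau)^\top A^\top r_\tau,\qquad r_\tau:=Af(\theta_\tau)-y,$$ $$\tilde\theta_{\tau+1}=\tilde\theta_\tau-\eta J^\top A^\top\tilde r_\tau,\qquad \tilde r_\tau:=Af(\theta_0)+AJ(\tilde\theta_\tau-\theta_0)-y.$$ Assumption A1: there is $\beta>0$ with $\|J\|\le\beta$ and $\|\mathcal{J}(\theta)\|\le\beta$ for all $\theta\in\mathbb{R}^N$. Assumption A2: there is $\varepsilon_0>0$ with $\|\mathcal{J}(\theta_0)-J\|\le\varepsilon_0$ and $\|\mathcal{J}(\theta_0)\mathcal{J}(\theta_0)^\top-JJ^\top\|\le\varepsilon_0^2$. Assumption A3: there are $\varepsilon>0$ and $R>0$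 with $\|\mathcal{J}(\theta)-\mathcal{J}(\theta_0)\|\le\varepsilon/2$ for all $\theta$ satisfying $\|\theta-\theta_0\|\le R$. *)

theory Defs
  imports "HOL-Analysis.Analysis"
begin

definition spec_norm :: "real^'c^'r \<Rightarrow> real" where
  "spec_norm M = onorm (\<lambda>x. M *v x)"

end

theory Submission
  imports Defs
begin

text \<open>
  Both iterations are gradient steps on least-squares residuals. Since \<open>\<eta>\<beta>\<^sup>2\<gamma>\<^sup>2 \<le> 1\<close>, each step of
  the linearized iteration decreases the squared residual by at least \<open>\<eta>\<close> times the squared
  gradient; so the linear residual never exceeds \<open>\<parallel>r\<^sub>0\<parallel>\<close> and, by Cauchy-Schwarz over the steps,
  the linear iterate stays within \<open>\<surd>(\<tau>\<eta>) \<parallel>r\<^sub>0\<parallel>\<close> of \<open>\<theta>\<^sub>0\<close>. The nonlinear residual obeys the same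
  descent up to a linearization error of relative size \<open>\<gamma>\<epsilon>\<close>, so its square grows at most by the
  factor \<open>(1 + \<eta>\<gamma>\<^sup>2\<epsilon>\<^sup>2)\<^sup>\<tau> \<le> 2\<close>. While \<open>\<theta>\<^sub>\<tau>\<close> stays in the ball of radius \<open>R\<close>, the two residual
  updates differ by the mismatch of the Gram matrices (\<open>\<epsilon>\<^sub>0\<^sup>2\<close>), the drift of the Jacobian (\<open>\<epsilon>/2\<close>) and
  the linearization error (\<open>\<epsilon>/2\<close>), each proportional to \<open>\<parallel>r\<^sub>\<tau>\<parallel>\<close>: the residual gap grows linearly
  and the parameter gap quadratically in \<open>\<tau>\<close>. The condition on \<open>R\<close> is exactly what makes these
  bounds keep \<open>\<theta>\<^sub>\<tau>\<close> within \<open>R/2\<close> of \<open>\<theta>\<^sub>0\<close>, which closes the induction.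
\<close>

section \<open>Spectral norm estimates\<close>

lemma matrix_vector_mult_uminus_right [simp]: "M *v (- x) = - (M *v x)"
  for M :: "'a::ring_1^'c^'r"
  by (simp add: matrix_vector_mult_def vec_eq_iff sum_negf)

lemma transpose_diff: "transpose (M - N) = transpose M - transpose (N :: 'a::ab_group_add^'c^'r)"
  by (simp add: transpose_def vec_eq_iff)

lemma norm_mult_vec_le_spec_norm:
  fixes M :: "real^'c^'r"
  shows "norm (M *v x) \<le> spec_norm M * norm x"
  unfolding spec_norm_def by (rule onorm) simp

lemma spec_norm_nonneg: "0 \<le> spec_norm (M :: real^'c^'r)"
  unfolding spec_norm_def by (rule onorm_pos_le) simp

lemma spec_norm_le:
  fixes M :: "real^'c^'r"
  assumes "\<And>x. norm (M *v x) \<le> e * norm x"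
  shows "spec_norm M \<le> e"
  unfolding spec_norm_def by (rule onorm_le) (rule assms)

lemma spec_norm_transpose_le: "spec_norm (transpose M) \<le> spec_norm (M :: real^'c^'r)"
proof (rule spec_norm_le)
  fix x :: "real^'r"
  define z where "z = transpose M *v x"
  have "norm z * norm z = z \<bullet> z"
    by (simp flip: power2_norm_eq_inner add: power2_eq_square)
  also have "\<dots> = x \<bullet> (M *v z)"
    unfolding z_def transpose_matrix_vector by (rule dot_lmul_matrix)
  also have "\<dots> \<le> norm x * (spec_norm M * norm z)"
    by (rule order_trans[OF norm_cauchy_schwarz]) (simp add: mult_left_mono norm_mult_vec_le_spec_norm)
  finally have "norm z * norm z \<le> (spec_norm M * norm x) * norm z"
    by (simp add: mult_ac)
  then show "norm z \<le> spec_norm M * norm x"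
    by (cases "norm z = 0") (auto simp: spec_norm_nonneg)
qed

lemma spec_norm_transpose: "spec_norm (transpose M) = spec_norm (M :: real^'c^'r)"
  using spec_norm_transpose_le[of M] spec_norm_transpose_le[of "transpose M"] by simp

lemma spec_norm_mult_le: "spec_norm (M ** N) \<le> spec_norm M * spec_norm (N :: real^'c^'r)"
  for M :: "real^'r^'s"
proof (rule spec_norm_le)
  fix x
  have "norm ((M ** N) *v x) \<le> spec_norm M * norm (N *v x)"
    by (simp add: norm_mult_vec_le_spec_norm flip: matrix_vector_mul_assoc)
  also have "\<dots> \<le> spec_norm M * (spec_norm N * norm x)"
    by (intro mult_left_mono norm_mult_vec_le_spec_norm spec_norm_nonneg)
  finally show "norm ((M ** N) *v x) \<le> spec_norm M * spec_norm N * norm x"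
    by (simp add: mult_ac)
qed

lemma spec_norm_triangle: "spec_norm (M + N) \<le> spec_norm M + spec_norm (N :: real^'c^'r)"
proof (rule spec_norm_le)
  fix x
  have "norm ((M + N) *v x) \<le> norm (M *v x) + norm (N *v x)"
    by (simp add: matrix_vector_mult_add_rdistrib norm_triangle_ineq)
  also have "\<dots> \<le> (spec_norm M + spec_norm N) * norm x"
    by (simp add: add_mono norm_mult_vec_le_spec_norm distrib_right)
  finally show "norm ((M + N) *v x) \<le> (spec_norm M + spec_norm N) * norm x" .
qed

lemma spec_norm_minus_commute: "spec_norm (M - N) = spec_norm (N - M :: real^'c^'r)"
proof -
  have "(\<lambda>x. (N - M) *v x) = (\<lambda>x. - ((M - N) *v x))"
    by (simp add: matrix_vector_mult_diff_rdistrib)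
  then show ?thesis
    unfolding spec_norm_def by (simp add: onorm_neg)
qed

lemma norm_mult_vec_le:
  fixes M :: "real^'c^'r"
  assumes "spec_norm M \<le> L" "norm x \<le> b"
  shows "norm (M *v x) \<le> L * b"
  by (rule order_trans[OF norm_mult_vec_le_spec_norm mult_mono])
     (use assms spec_norm_nonneg[of M] in auto)

section \<open>Gradient steps and linearization\<close>

lemma norm_gradient_step_sq_le:
  fixes M :: "real^'c^'r"
  assumes "spec_norm M \<le> L" "0 \<le> \<eta>" "\<eta> * L^2 \<le> 1"
  shows "norm (v - \<eta> *\<^sub>R (M *v (transpose M *v v)))^2
           \<le> norm v^2 - \<eta> * norm (transpose M *v v)^2"
proof -
  define g where "g = transpose M *v v"
  define w where "w = M *v g"
  have expand: "norm (v - \<eta> *\<^sub>R w)^2 = norm v^2 - 2*\<eta>*(v \<bullet> w) + \<eta>^2 * norm w^2"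
    by (simp only: power2_norm_eq_inner inner_diff_left inner_diff_right inner_scaleR_left
        inner_scaleR_right inner_commute[of w v]) (simp add: algebra_simps power2_eq_square)
  have vw: "v \<bullet> w = norm g ^ 2"
    by (simp add: w_def g_def dot_lmul_matrix power2_norm_eq_inner)
  have "\<eta>^2 * norm w^2 \<le> \<eta> * norm g^2"
  proof -
    have "norm w \<le> L * norm g"
      unfolding w_def by (rule norm_mult_vec_le) (use assms in auto)
    then have "norm w^2 \<le> L^2 * norm g^2"
      using power_mono[of "norm w" "L * norm g" 2] by (simp add: power_mult_distrib)
    then have "\<eta>^2 * norm w^2 \<le> \<eta>^2 * (L^2 * norm g^2)"
      by (simp add: mult_left_mono)
    also have "\<dots> = \<eta> * (\<eta> * L^2) * norm g^2"
      by (simp add: power2_eq_square)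
    also have "\<dots> \<le> \<eta> * norm g^2"
      using assms by (intro mult_right_mono) (auto simp: mult_left_le)
    finally show ?thesis .
  qed
  then show ?thesis
    unfolding g_def[symmetric] w_def[symmetric] expand vw by linarith
qed

lemma norm_gradient_step_le:
  fixes M :: "real^'c^'r"
  assumes "spec_norm M \<le> L" "0 \<le> \<eta>" "\<eta> * L^2 \<le> 1"
  shows "norm (v - \<eta> *\<^sub>R (M *v (transpose M *v v))) \<le> norm v"
proof (rule power2_le_imp_le)
  have "0 \<le> \<eta> * norm (transpose M *v v)^2"
    using assms(2) by simp
  then show "norm (v - \<eta> *\<^sub>R (M *v (transpose M *v v)))^2 \<le> norm v^2"
    using norm_gradient_step_sq_le[OF assms, of v] by linarith
qed simp

lemma linearization_error_le:
  fixes f :: "real^'c \<Rightarrow> real^'r" and Jf :: "real^'c \<Rightarrow> real^'c^'r"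
  assumes "\<And>x. (f has_derivative (\<lambda>h. Jf x *v h)) (at x)"
    and "convex S" "a \<in> S" "b \<in> S" "c \<in> S"
    and "\<And>x. x \<in> S \<Longrightarrow> spec_norm (Jf x - Jf c) \<le> e"
  shows "norm (f b - f a - Jf c *v (b - a)) \<le> e * norm (b - a)"
proof -
  have "norm (f b - f a - Jf c *v (b - a)) \<le> norm (b - a) * e"
  proof (rule differentiable_bound_linearization[where f' = "\<lambda>x h. Jf x *v h"])
    show "a + t *\<^sub>R (b - a) \<in> S" if "t \<in> {0..1}" for t
      using convexD_alt[OF assms(2,3,4), of t] that by (simp add: algebra_simps)
    show "onorm ((\<lambda>h. Jf x *v h) - (\<lambda>h. Jf c *v h)) \<le> e" if "x \<in> S" for x
      using assms(6)[OF that]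
      by (simp add: spec_norm_def fun_diff_def matrix_vector_mult_diff_rdistrib)
    show "(f has_derivative (\<lambda>h. Jf x *v h)) (at x within S)" for x
      by (rule has_derivative_at_withinI[OF assms(1)])
  qed (use assms in auto)
  then show ?thesis by (simp add: mult.commute)
qed

lemma norm_add3_diff_le:
  "norm ((a::'a::real_normed_vector) + b + c - d) \<le> norm a + norm b + norm c + norm d"
  using norm_triangle_ineq4[of "a + b + c" d] norm_triangle_ineq[of "a + b" c]
    norm_triangle_ineq[of a b] by linarith

lemma power2_add_le_weighted:
  fixes a b n X Y :: real
  assumes "0 \<le> a" "0 \<le> b" "0 \<le> n" "0 \<le> X" "a^2 \<le> n * X" "b^2 \<le> Y"
  shows "(a + b)^2 \<le> (n + 1) * (X + Y)"
proof (cases "n = 0")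
  case True
  then show ?thesis using assms by simp
next
  case False
  then have n: "n > 0" using assms by simp
  have "n * (2*a*b) \<le> a^2 + n^2*b^2"
    using sum_squares_ge_zero[of "a - n*b" 0] by (simp add: power2_eq_square algebra_simps)
  also have "\<dots> \<le> n * (X + n*Y)"
    using assms n by (simp add: algebra_simps power2_eq_square add_mono)
  finally have "2*a*b \<le> X + n * Y" using n by simp
  then show ?thesis using assms by (simp add: power2_eq_square algebra_simps)
qed

lemma power2_perturbed_descent_le:
  fixes x q G b \<eta> P :: real
  assumes "0 \<le> q" "0 \<le> G" "0 \<le> \<eta>" "q^2 \<le> P - \<eta> * G^2" "0 \<le> x" "x \<le> q + b*\<eta>*G"
  shows "x^2 \<le> (1 + \<eta>*b^2) * P"
proof -
  have "x^2 \<le> (q + b*\<eta>*G)^2" using assms by (intro power_mono) auto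
  also have "\<dots> = (1 + \<eta>*b^2)*(q^2 + \<eta>*G^2) - \<eta>*(b*q - G)^2"
    by (simp add: power2_eq_square algebra_simps)
  also have "\<dots> \<le> (1 + \<eta>*b^2)*(q^2 + \<eta>*G^2)" using assms by simp
  also have "\<dots> \<le> (1 + \<eta>*b^2)*P" using assms by (intro mult_left_mono) auto
  finally show ?thesis .
qed

lemma one_plus_power_le_two:
  fixes a :: real
  assumes "0 \<le> a" "real n * a \<le> 1/2"
  shows "(1 + a)^n \<le> 2"
proof -
  have "(1 + a)^n \<le> exp a ^ n" by (rule power_mono) (use assms in auto)
  also have "\<dots> = exp (real n * a)" by (simp add: exp_of_nat_mult)
  also have "\<dots> \<le> 2" using exp_bound_half[of "real n * a"] assms by simp
  finally show ?thesis .
qed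

section \<open>Gradient descent and its linearization\<close>

locale linearized_gradient_descent =
  fixes f :: "real^'N \<Rightarrow> real^'n"
    and Jf :: "real^'N \<Rightarrow> real^'N^'n"
    and A :: "real^'n^'m"
    and J :: "real^'N^'n"
    and y :: "real^'m"
    and \<theta>0 :: "real^'N"
    and \<theta> \<theta>t :: "nat \<Rightarrow> real^'N"
    and \<gamma> \<eta> \<beta> \<epsilon>0 \<epsilon> R :: real
    and T :: nat
  assumes deriv: "\<And>x. (f has_derivative (\<lambda>h. Jf x *v h)) (at x)"
    and A_bound: "spec_norm A \<le> \<gamma>"
    and eta_pos: "0 < \<eta>"
    and theta0: "\<theta> 0 = \<theta>0"
    and theta_step: "\<And>\<tau>. \<theta> (Suc \<tau>) = \<theta> \<tau> - \<eta> *\<^sub>R (transpose (Jf (\<theta> \<tau>)) *v (transpose A *v (A *v f (\<theta> \<tau>) - y)))"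
    and thetat0: "\<theta>t 0 = \<theta>0"
    and thetat_step: "\<And>\<tau>. \<theta>t (Suc \<tau>) = \<theta>t \<tau> - \<eta> *\<^sub>R (transpose J *v (transpose A *v
           (A *v f \<theta>0 + A *v (J *v (\<theta>t \<tau> - \<theta>0)) - y)))"
    and J_bound: "spec_norm J \<le> \<beta>"
    and Jf_bound: "\<And>x. spec_norm (Jf x) \<le> \<beta>"
    and Jf_theta0_close: "spec_norm (Jf \<theta>0 - J) \<le> \<epsilon>0"
    and gram_close: "spec_norm (Jf \<theta>0 ** transpose (Jf \<theta>0) - J ** transpose J) \<le> \<epsilon>0 ^ 2"
    and eps_nonneg: "0 \<le> \<epsilon>"
    and Jf_local: "\<And>x. norm (x - \<theta>0) \<le> R \<Longrightarrow> spec_norm (Jf x - Jf \<theta>0) \<le> \<epsilon> / 2"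
    and eta_bound: "\<eta> * \<beta>^2 * \<gamma>^2 \<le> 1"
    and T_bound: "2 * \<eta> * \<gamma>^2 * \<epsilon>^2 * real T \<le> 1"
    and R_step: "2 * norm (A *v f \<theta>0 - y) *
        (\<eta> * \<gamma> * \<beta> * (1 + 2 * \<eta> * \<gamma>^2 * (\<epsilon>0^2 + \<beta> * \<epsilon>) * real T)) \<le> R"
    and R_drift: "2 * norm (A *v f \<theta>0 - y) *
        (sqrt (real T) * (sqrt \<eta> + \<eta> * \<gamma> * sqrt (real T) *
           (\<epsilon> + \<epsilon>0 + \<eta> * \<gamma>^2 * \<beta> * (\<epsilon>0^2 + \<epsilon> * \<beta>) * real T))) \<le> R"
begin

definition r :: "nat \<Rightarrow> real^'m" where
  "r \<tau> = A *v f (\<theta> \<tau>) - y"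

definition rt :: "nat \<Rightarrow> real^'m" where
  "rt \<tau> = A *v f \<theta>0 + A *v (J *v (\<theta>t \<tau> - \<theta>0)) - y"

definition \<rho> :: real where
  "\<rho> = norm (A *v f \<theta>0 - y)"

definition growth_rate :: real where
  "growth_rate = \<eta> * \<gamma>^2 * \<epsilon>^2"

definition gap_rate :: real where
  "gap_rate = \<eta> * \<gamma>^2 * (\<epsilon>0^2 + \<beta> * \<epsilon>)"

lemma gamma_nonneg: "0 \<le> \<gamma>"
  using A_bound spec_norm_nonneg order_trans by blast

lemma beta_nonneg: "0 \<le> \<beta>"
  using J_bound spec_norm_nonneg order_trans by blast

lemma eps0_nonneg: "0 \<le> \<epsilon>0"
  using Jf_theta0_close spec_norm_nonneg order_trans by blast

lemma rho_nonneg: "0 \<le> \<rho>"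
  by (simp add: \<rho>_def)

lemma growth_rate_nonneg: "0 \<le> growth_rate"
  using eta_pos by (simp add: growth_rate_def)

lemma gap_rate_nonneg: "0 \<le> gap_rate"
  using eta_pos beta_nonneg eps_nonneg by (simp add: gap_rate_def)

lemma AJ_bound: "spec_norm (A ** J) \<le> \<gamma> * \<beta>"
  by (rule order_trans[OF spec_norm_mult_le mult_mono])
     (use A_bound J_bound gamma_nonneg spec_norm_nonneg in auto)

lemma eta_AJ_bound: "\<eta> * (\<gamma> * \<beta>)^2 \<le> 1"
  using eta_bound by (simp add: power_mult_distrib mult_ac)

lemma thetat_Suc: "\<theta>t (Suc \<tau>) = \<theta>t \<tau> - \<eta> *\<^sub>R (transpose (A ** J) *v rt \<tau>)"
  by (simp add: thetat_step rt_def matrix_transpose_mul flip: matrix_vector_mul_assoc)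

lemma rt_Suc: "rt (Suc \<tau>) = rt \<tau> - \<eta> *\<^sub>R ((A ** J) *v (transpose (A ** J) *v rt \<tau>))"
  by (simp add: rt_def thetat_Suc algebra_simps flip: matrix_vector_mul_assoc)

lemma norm_rt_Suc_sq:
  "norm (rt (Suc \<tau>))^2 \<le> norm (rt \<tau>)^2 - \<eta> * norm (transpose (A ** J) *v rt \<tau>)^2"
  unfolding rt_Suc by (rule norm_gradient_step_sq_le[OF AJ_bound]) (use eta_pos eta_AJ_bound in auto)

lemma norm_rt_le: "norm (rt \<tau>) \<le> \<rho>"
proof (induction \<tau>)
  case 0
  then show ?case by (simp add: rt_def thetat0 \<rho>_def)
next
  case (Suc \<tau>)
  have "norm (rt (Suc \<tau>)) \<le> norm (rt \<tau>)"
    unfolding rt_Suc by (rule norm_gradient_step_le[OF AJ_bound]) (use eta_pos eta_AJ_bound in auto)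
  with Suc.IH show ?case by linarith
qed

text \<open>Cauchy-Schwarz over the steps, in inductive form: the squared step lengths \<open>\<eta>\<^sup>2\<parallel>g\<parallel>\<^sup>2\<close> add up
  to at most \<open>\<eta>\<close> times the total decrease of \<open>\<parallel>rt\<parallel>\<^sup>2\<close>.\<close>

lemma norm_thetat_drift_sq: "norm (\<theta>t \<tau> - \<theta>0)^2 \<le> real \<tau> * \<eta> * (\<rho>^2 - norm (rt \<tau>)^2)"
proof (induction \<tau>)
  case 0
  then show ?case by (simp add: thetat0)
next
  case (Suc \<tau>)
  define g where "g = transpose (A ** J) *v rt \<tau>"
  have descent: "\<eta> * norm g^2 \<le> norm (rt \<tau>)^2 - norm (rt (Suc \<tau>))^2"
    using norm_rt_Suc_sq[of \<tau>] by (simp add: g_def)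
  have "norm (\<theta>t (Suc \<tau>) - \<theta>0) \<le> norm (\<theta>t \<tau> - \<theta>0) + \<eta> * norm g"
    using norm_triangle_ineq4[of "\<theta>t \<tau> - \<theta>0" "\<eta> *\<^sub>R g"] eta_pos
    by (simp add: thetat_Suc g_def algebra_simps)
  then have "norm (\<theta>t (Suc \<tau>) - \<theta>0)^2 \<le> (norm (\<theta>t \<tau> - \<theta>0) + \<eta> * norm g)^2"
    by (rule power_mono) simp
  also have "\<dots> \<le> (real \<tau> + 1) * (\<eta> * (\<rho>^2 - norm (rt \<tau>)^2)
                     + \<eta> * (norm (rt \<tau>)^2 - norm (rt (Suc \<tau>))^2))"
  proof (rule power2_add_le_weighted)
    show "0 \<le> \<eta> * (\<rho>^2 - norm (rt \<tau>)^2)"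
      using eta_pos norm_rt_le[of \<tau>] by (simp add: power_mono)
    show "(\<eta> * norm g)^2 \<le> \<eta> * (norm (rt \<tau>)^2 - norm (rt (Suc \<tau>))^2)"
      using mult_left_mono[OF descent, of \<eta>] eta_pos by (simp add: power2_eq_square mult_ac)
  qed (use Suc.IH eta_pos in \<open>auto simp: mult_ac\<close>)
  also have "\<dots> = real (Suc \<tau>) * \<eta> * (\<rho>^2 - norm (rt (Suc \<tau>))^2)"
    by (simp add: algebra_simps)
  finally show ?case .
qed

lemma norm_thetat_drift:
  assumes "\<tau> \<le> T"
  shows "norm (\<theta>t \<tau> - \<theta>0) \<le> sqrt (real T) * sqrt \<eta> * \<rho>"
proof (rule power2_le_imp_le)
  have "norm (\<theta>t \<tau> - \<theta>0)^2 \<le> real \<tau> * \<eta> * \<rho>^2"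
    using norm_thetat_drift_sq[of \<tau>] mult_left_mono[of "\<rho>^2 - norm (rt \<tau>)^2" "\<rho>^2" "real \<tau> * \<eta>"]
      eta_pos by simp
  also have "\<dots> \<le> real T * \<eta> * \<rho>^2"
    using assms eta_pos by (intro mult_right_mono) auto
  also have "\<dots> = (sqrt (real T) * sqrt \<eta> * \<rho>)^2"
    using eta_pos by (simp add: power_mult_distrib)
  finally show "norm (\<theta>t \<tau> - \<theta>0)^2 \<le> (sqrt (real T) * sqrt \<eta> * \<rho>)^2" .
qed (use rho_nonneg eta_pos in simp)

lemma theta_Suc: "\<theta> (Suc \<tau>) = \<theta> \<tau> - \<eta> *\<^sub>R (transpose (A ** Jf (\<theta> \<tau>)) *v r \<tau>)"
  by (simp add: theta_step r_def matrix_transpose_mul flip: matrix_vector_mul_assoc)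

lemma norm_theta_step: "norm (\<theta> (Suc \<tau>) - \<theta> \<tau>) \<le> \<eta> * \<beta> * \<gamma> * norm (r \<tau>)"
proof -
  have "norm (transpose (Jf (\<theta> \<tau>)) *v (transpose A *v r \<tau>)) \<le> \<beta> * (\<gamma> * norm (r \<tau>))"
    using Jf_bound A_bound
    by (intro norm_mult_vec_le) (simp_all add: spec_norm_transpose norm_mult_vec_le)
  then show ?thesis
    using eta_pos by (simp add: theta_step r_def mult_left_mono mult.assoc)
qed

lemma Jf_diff_bound:
  assumes "norm (x - \<theta>0) \<le> R" "norm (z - \<theta>0) \<le> R"
  shows "spec_norm (Jf x - Jf z) \<le> \<epsilon>"
proof -
  have "spec_norm (Jf x - Jf z) \<le> spec_norm (Jf x - Jf \<theta>0) + spec_norm (Jf \<theta>0 - Jf z)"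
    using spec_norm_triangle[of "Jf x - Jf \<theta>0" "Jf \<theta>0 - Jf z"] by simp
  also have "\<dots> \<le> \<epsilon> / 2 + \<epsilon> / 2"
    using Jf_local[OF assms(1)] Jf_local[OF assms(2)] by (simp add: spec_norm_minus_commute)
  finally show ?thesis by simp
qed

lemma norm_r_Suc_sq:
  assumes "norm (\<theta> \<tau> - \<theta>0) \<le> R" "norm (\<theta> (Suc \<tau>) - \<theta>0) \<le> R"
  shows "norm (r (Suc \<tau>))^2 \<le> (1 + growth_rate) * norm (r \<tau>)^2"
proof -
  define M where "M = A ** Jf (\<theta> \<tau>)"
  define g where "g = transpose M *v r \<tau>"
  define \<delta> where "\<delta> = f (\<theta> (Suc \<tau>)) - f (\<theta> \<tau>) - Jf (\<theta> \<tau>) *v (\<theta> (Suc \<tau>) - \<theta> \<tau>)"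
  have step: "\<theta> (Suc \<tau>) - \<theta> \<tau> = - (\<eta> *\<^sub>R g)"
    by (simp add: theta_Suc M_def g_def)
  have "norm \<delta> \<le> \<epsilon> * norm (\<theta> (Suc \<tau>) - \<theta> \<tau>)"
    unfolding \<delta>_def
    by (rule linearization_error_le[OF deriv convex_cball[of \<theta>0 R], where c = "\<theta> \<tau>"])
       (use assms Jf_diff_bound in \<open>auto simp: dist_norm norm_minus_commute\<close>)
  then have "norm (A *v \<delta>) \<le> \<gamma> * (\<epsilon> * norm (\<theta> (Suc \<tau>) - \<theta> \<tau>))"
    by (rule norm_mult_vec_le[OF A_bound])
  then have "norm (A *v \<delta>) \<le> \<gamma> * \<epsilon> * \<eta> * norm g"
    using eta_pos by (simp add: step mult_ac)
  moreover have "r (Suc \<tau>) = (r \<tau> - \<eta> *\<^sub>R (M *v g)) + A *v \<delta>"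
    by (simp add: r_def \<delta>_def step M_def algebra_simps flip: matrix_vector_mul_assoc)
  ultimately have "norm (r (Suc \<tau>)) \<le> norm (r \<tau> - \<eta> *\<^sub>R (M *v g)) + \<gamma> * \<epsilon> * \<eta> * norm g"
    using norm_triangle_ineq[of "r \<tau> - \<eta> *\<^sub>R (M *v g)" "A *v \<delta>"] by simp
  moreover have "spec_norm M \<le> \<gamma> * \<beta>"
    unfolding M_def
    by (rule order_trans[OF spec_norm_mult_le mult_mono])
       (use A_bound Jf_bound gamma_nonneg spec_norm_nonneg in auto)
  then have "norm (r \<tau> - \<eta> *\<^sub>R (M *v g))^2 \<le> norm (r \<tau>)^2 - \<eta> * norm g^2"
    unfolding g_def by (rule norm_gradient_step_sq_le) (use eta_pos eta_AJ_bound in auto)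
  ultimately have "norm (r (Suc \<tau>))^2 \<le> (1 + \<eta> * (\<gamma> * \<epsilon>)^2) * norm (r \<tau>)^2"
    using eta_pos by (intro power2_perturbed_descent_le) auto
  then show ?thesis
    by (simp add: growth_rate_def power_mult_distrib mult_ac)
qed

text \<open>The four terms: the linear model's own contraction of the gap, the mismatch of the Gram
  matrices, the drift of the Jacobian along the trajectory, and the linearization error.\<close>

lemma gap_Suc_decomposition:
  fixes \<tau> :: nat
  defines "e \<equiv> rt \<tau> - r \<tau>" and "z \<equiv> transpose A *v r \<tau>" and "K \<equiv> Jf \<theta>0"
    and "\<delta> \<equiv> f (\<theta> (Suc \<tau>)) - f (\<theta> \<tau>) - Jf \<theta>0 *v (\<theta> (Suc \<tau>) - \<theta> \<tau>)"
  shows "rt (Suc \<tau>) - r (Suc \<tau>) =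
      (e - \<eta> *\<^sub>R ((A ** J) *v (transpose (A ** J) *v e)))
      + \<eta> *\<^sub>R (A *v ((K ** transpose K - J ** transpose J) *v z))
      + \<eta> *\<^sub>R (A *v (K *v (transpose (Jf (\<theta> \<tau>) - K) *v z)))
      - A *v \<delta>"
proof -
  have "transpose (Jf (\<theta> \<tau>)) = transpose K + transpose (Jf (\<theta> \<tau>) - K)"
    by (simp add: transpose_diff)
  then have step: "K *v (\<theta> (Suc \<tau>) - \<theta> \<tau>)
      = - (\<eta> *\<^sub>R ((K ** transpose K) *v z)) - \<eta> *\<^sub>R (K *v (transpose (Jf (\<theta> \<tau>) - K) *v z))"
    by (simp add: theta_step r_def z_def algebra_simps flip: matrix_vector_mul_assoc)
  have "r (Suc \<tau>) = r \<tau> + A *v (K *v (\<theta> (Suc \<tau>) - \<theta> \<tau>)) + A *v \<delta>"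
    by (simp add: r_def \<delta>_def K_def algebra_simps)
  moreover have "rt (Suc \<tau>) = e + r \<tau> - \<eta> *\<^sub>R ((A ** J) *v (transpose (A ** J) *v e))
      - \<eta> *\<^sub>R (A *v ((J ** transpose J) *v z))"
    by (simp add: rt_Suc e_def z_def matrix_transpose_mul algebra_simps flip: matrix_vector_mul_assoc)
  ultimately show ?thesis
    unfolding step by (simp add: algebra_simps)
qed

lemma norm_gap_Suc:
  assumes "norm (\<theta> \<tau> - \<theta>0) \<le> R" "norm (\<theta> (Suc \<tau>) - \<theta>0) \<le> R"
  shows "norm (rt (Suc \<tau>) - r (Suc \<tau>)) \<le> norm (rt \<tau> - r \<tau>) + gap_rate * norm (r \<tau>)"
proof -
  define e where "e = rt \<tau> - r \<tau>"
  define z where "z = transpose A *v r \<tau>"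
  define K where "K = Jf \<theta>0"
  define \<delta> where "\<delta> = f (\<theta> (Suc \<tau>)) - f (\<theta> \<tau>) - K *v (\<theta> (Suc \<tau>) - \<theta> \<tau>)"
  have decomposition: "rt (Suc \<tau>) - r (Suc \<tau>) =
      (e - \<eta> *\<^sub>R ((A ** J) *v (transpose (A ** J) *v e)))
      + \<eta> *\<^sub>R (A *v ((K ** transpose K - J ** transpose J) *v z))
      + \<eta> *\<^sub>R (A *v (K *v (transpose (Jf (\<theta> \<tau>) - K) *v z)))
      - A *v \<delta>"
    unfolding e_def z_def K_def \<delta>_def by (rule gap_Suc_decomposition)
  have z: "norm z \<le> \<gamma> * norm (r \<tau>)"
    unfolding z_def by (rule norm_mult_vec_le) (simp_all add: spec_norm_transpose A_bound)
  have n1: "norm (e - \<eta> *\<^sub>R ((A ** J) *v (transpose (A ** J) *v e))) \<le> norm e"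
    by (rule norm_gradient_step_le[OF AJ_bound]) (use eta_pos eta_AJ_bound in auto)
  have "norm (A *v ((K ** transpose K - J ** transpose J) *v z)) \<le> \<gamma> * (\<epsilon>0^2 * (\<gamma> * norm (r \<tau>)))"
    using gram_close z unfolding K_def by (intro norm_mult_vec_le A_bound)
  then have n2: "norm (\<eta> *\<^sub>R (A *v ((K ** transpose K - J ** transpose J) *v z)))
      \<le> \<eta> * \<gamma>^2 * \<epsilon>0^2 * norm (r \<tau>)"
    using eta_pos by (simp add: mult_left_mono power2_eq_square mult_ac)
  have "spec_norm (transpose (Jf (\<theta> \<tau>) - K)) \<le> \<epsilon> / 2"
    using Jf_local[OF assms(1)] by (simp add: spec_norm_transpose K_def)
  then have "norm (A *v (K *v (transpose (Jf (\<theta> \<tau>) - K) *v z))) \<le> \<gamma> * (\<beta> * (\<epsilon> / 2 * (\<gamma> * norm (r \<tau>))))"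
    using z unfolding K_def by (intro norm_mult_vec_le A_bound Jf_bound)
  then have n3: "norm (\<eta> *\<^sub>R (A *v (K *v (transpose (Jf (\<theta> \<tau>) - K) *v z))))
      \<le> \<eta> * \<gamma>^2 * \<beta> * (\<epsilon> / 2) * norm (r \<tau>)"
    using eta_pos by (simp add: mult_left_mono power2_eq_square mult_ac)
  have "norm \<delta> \<le> \<epsilon> / 2 * norm (\<theta> (Suc \<tau>) - \<theta> \<tau>)"
    unfolding \<delta>_def K_def
    by (rule linearization_error_le[OF deriv convex_cball[of \<theta>0 R], where c = \<theta>0])
       (use assms Jf_local eps_nonneg order_trans[OF norm_ge_zero assms(1)] in \<open>auto simp: dist_norm norm_minus_commute\<close>)
  also have "\<dots> \<le> \<epsilon> / 2 * (\<eta> * \<beta> * \<gamma> * norm (r \<tau>))"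
    using norm_theta_step eps_nonneg by (intro mult_left_mono) auto
  finally have n4: "norm (A *v \<delta>) \<le> \<eta> * \<gamma>^2 * \<beta> * (\<epsilon> / 2) * norm (r \<tau>)"
    using norm_mult_vec_le[OF A_bound] by (fastforce simp: power2_eq_square mult_ac)
  have "norm (rt (Suc \<tau>) - r (Suc \<tau>))
      \<le> norm e + \<eta> * \<gamma>^2 * \<epsilon>0^2 * norm (r \<tau>) + \<eta> * \<gamma>^2 * \<beta> * (\<epsilon> / 2) * norm (r \<tau>)
         + \<eta> * \<gamma>^2 * \<beta> * (\<epsilon> / 2) * norm (r \<tau>)"
    unfolding decomposition by (rule order_trans[OF norm_add3_diff_le]) (intro add_mono n1 n2 n3 n4)
  also have "\<dots> = norm e + gap_rate * norm (r \<tau>)"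
    by (simp add: gap_rate_def algebra_simps)
  finally show ?thesis by (simp add: e_def)
qed

lemma norm_theta_gap_Suc:
  assumes "norm (\<theta> \<tau> - \<theta>0) \<le> R"
  shows "norm (\<theta>t (Suc \<tau>) - \<theta> (Suc \<tau>))
    \<le> norm (\<theta>t \<tau> - \<theta> \<tau>) + \<eta> * \<gamma> * (\<epsilon>0 + \<epsilon> / 2) * \<rho> + \<eta> * \<beta> * \<gamma> * norm (rt \<tau> - r \<tau>)"
proof -
  define Jt where "Jt = Jf (\<theta> \<tau>)"
  define u where "u = \<eta> *\<^sub>R (transpose (J - Jt) *v (transpose A *v rt \<tau>))"
  define v where "v = \<eta> *\<^sub>R (transpose Jt *v (transpose A *v (rt \<tau> - r \<tau>)))"
  have decomposition: "\<theta>t (Suc \<tau>) - \<theta> (Suc \<tau>) = (\<theta>t \<tau> - \<theta> \<tau>) - u - v"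
    by (simp add: thetat_step theta_step rt_def r_def u_def v_def Jt_def transpose_diff algebra_simps)
  have "spec_norm (J - Jt) \<le> spec_norm (J - Jf \<theta>0) + spec_norm (Jf \<theta>0 - Jt)"
    using spec_norm_triangle[of "J - Jf \<theta>0" "Jf \<theta>0 - Jt"] by simp
  also have "\<dots> \<le> \<epsilon>0 + \<epsilon> / 2"
    using Jf_theta0_close Jf_local[OF assms] by (simp add: Jt_def spec_norm_minus_commute add_mono)
  finally have "norm (transpose (J - Jt) *v (transpose A *v rt \<tau>)) \<le> (\<epsilon>0 + \<epsilon> / 2) * (\<gamma> * \<rho>)"
    using A_bound norm_rt_le by (intro norm_mult_vec_le) (simp_all add: spec_norm_transpose)
  then have u: "norm u \<le> \<eta> * \<gamma> * (\<epsilon>0 + \<epsilon> / 2) * \<rho>"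
    using eta_pos by (simp add: u_def mult_left_mono mult_ac)
  have "norm (transpose Jt *v (transpose A *v (rt \<tau> - r \<tau>))) \<le> \<beta> * (\<gamma> * norm (rt \<tau> - r \<tau>))"
    using A_bound Jf_bound unfolding Jt_def
    by (intro norm_mult_vec_le) (simp_all add: spec_norm_transpose)
  then have v: "norm v \<le> \<eta> * \<beta> * \<gamma> * norm (rt \<tau> - r \<tau>)"
    using eta_pos by (simp add: v_def mult_left_mono mult_ac)
  show ?thesis
    unfolding decomposition
    using norm_triangle_ineq4[of "\<theta>t \<tau> - \<theta> \<tau> - u" v] norm_triangle_ineq4[of "\<theta>t \<tau> - \<theta> \<tau>" u] u v
    by linarith
qed

lemma beta_gap_rate: "\<beta> * gap_rate = \<eta> * \<gamma>^2 * \<beta> * (\<epsilon>0^2 + \<epsilon> * \<beta>)"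
  by (simp add: gap_rate_def algebra_simps)

lemma norm_r_le_two_rho:
  assumes "\<tau> \<le> T" "norm (r \<tau>)^2 \<le> (1 + growth_rate)^\<tau> * \<rho>^2"
  shows "norm (r \<tau>) \<le> 2 * \<rho>"
proof (rule power2_le_imp_le)
  have "real \<tau> * growth_rate \<le> real T * growth_rate"
    using assms(1) growth_rate_nonneg by (intro mult_right_mono) auto
  also have "\<dots> \<le> 1 / 2"
    using T_bound by (simp add: growth_rate_def algebra_simps)
  finally have "(1 + growth_rate)^\<tau> * \<rho>^2 \<le> 2 * \<rho>^2"
    using one_plus_power_le_two[OF growth_rate_nonneg] by (simp add: mult_right_mono)
  moreover have "(2 * \<rho>)^2 = 4 * \<rho>^2"
    by (simp add: power_mult_distrib)
  ultimately show "norm (r \<tau>)^2 \<le> (2 * \<rho>)^2"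
    using assms(2) zero_le_power2[of \<rho>] by linarith
qed (use rho_nonneg in simp)

lemma theta_Suc_in_ball:
  assumes "Suc \<tau> \<le> T" "norm (\<theta> \<tau> - \<theta>0) \<le> R / 2"
    and "norm (rt \<tau> - r \<tau>) \<le> 2 * gap_rate * real \<tau> * \<rho>"
  shows "norm (\<theta> (Suc \<tau>) - \<theta>0) \<le> R"
proof -
  have "2 * gap_rate * real \<tau> * \<rho> \<le> 2 * gap_rate * real T * \<rho>"
    using assms(1) gap_rate_nonneg rho_nonneg by (intro mult_right_mono mult_left_mono) auto
  then have "norm (r \<tau>) \<le> (1 + 2 * gap_rate * real T) * \<rho>"
    using norm_triangle_ineq4[of "rt \<tau>" "rt \<tau> - r \<tau>"] norm_rt_le[of \<tau>] assms(3)
    by (simp add: algebra_simps)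
  then have "\<eta> * \<beta> * \<gamma> * norm (r \<tau>) \<le> \<eta> * \<beta> * \<gamma> * ((1 + 2 * gap_rate * real T) * \<rho>)"
    using eta_pos beta_nonneg gamma_nonneg by (simp add: mult_left_mono)
  then have "norm (\<theta> (Suc \<tau>) - \<theta> \<tau>) \<le> \<eta> * \<beta> * \<gamma> * ((1 + 2 * gap_rate * real T) * \<rho>)"
    using norm_theta_step[of \<tau>] by linarith
  also have "\<dots> \<le> R / 2"
    using R_step by (simp add: gap_rate_def \<rho>_def algebra_simps)
  finally show ?thesis
    using norm_triangle_ineq[of "\<theta> (Suc \<tau>) - \<theta> \<tau>" "\<theta> \<tau> - \<theta>0"] assms(2) by simp
qed

lemma theta_near_theta0:
  assumes "\<tau> \<le> T"
    and "norm (\<theta>t \<tau> - \<theta> \<tau>) \<le> \<eta> * \<gamma> * (\<epsilon> + \<epsilon>0 + \<beta> * gap_rate * real \<tau>) * real \<tau> * \<rho>"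
  shows "norm (\<theta> \<tau> - \<theta>0) \<le> R / 2"
proof -
  have "\<eta> * \<gamma> * (\<epsilon> + \<epsilon>0 + \<beta> * gap_rate * real \<tau>) * real \<tau> * \<rho>
      \<le> \<eta> * \<gamma> * (\<epsilon> + \<epsilon>0 + \<beta> * gap_rate * real T) * real T * \<rho>"
    using assms(1) eta_pos gamma_nonneg beta_nonneg gap_rate_nonneg eps_nonneg eps0_nonneg rho_nonneg
    by (intro mult_right_mono mult_mono mult_left_mono add_left_mono) auto
  moreover have "norm (\<theta> \<tau> - \<theta>0) \<le> norm (\<theta>t \<tau> - \<theta>0) + norm (\<theta>t \<tau> - \<theta> \<tau>)"
    using norm_triangle_ineq4[of "\<theta>t \<tau> - \<theta>0" "\<theta>t \<tau> - \<theta> \<tau>"] by simp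
  moreover have "sqrt (real T) * sqrt \<eta> * \<rho> + \<eta> * \<gamma> * (\<epsilon> + \<epsilon>0 + \<beta> * gap_rate * real T) * real T * \<rho>
      \<le> R / 2"
  proof -
    have "\<rho> * (q * (sqrt \<eta> + \<eta> * \<gamma> * q * (\<epsilon> + \<epsilon>0 + \<beta> * gap_rate * real T)))
        = q * sqrt \<eta> * \<rho> + \<eta> * \<gamma> * (\<epsilon> + \<epsilon>0 + \<beta> * gap_rate * real T) * (q * q) * \<rho>" for q
      by (simp add: algebra_simps)
    from this[of "sqrt (real T)"]
    have "sqrt (real T) * sqrt \<eta> * \<rho> + \<eta> * \<gamma> * (\<epsilon> + \<epsilon>0 + \<beta> * gap_rate * real T) * real T * \<rho>
        = \<rho> * (sqrt (real T) * (sqrt \<eta> + \<eta> * \<gamma> * sqrt (real T) *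
           (\<epsilon> + \<epsilon>0 + \<eta> * \<gamma>^2 * \<beta> * (\<epsilon>0^2 + \<epsilon> * \<beta>) * real T)))"
      by (simp add: beta_gap_rate)
    then show ?thesis
      using R_drift by (simp add: \<rho>_def)
  qed
  ultimately show ?thesis
    using norm_thetat_drift[OF assms(1)] assms(2) by linarith
qed

text \<open>\<open>\<parallel>\<theta> \<tau> - \<theta>0\<parallel> \<le> R/2\<close> is not part of the invariant: it follows from the parameter gap bound
  by \<open>theta_near_theta0\<close>.\<close>

definition gap_bounds :: "nat \<Rightarrow> bool" where
  "gap_bounds \<tau> \<longleftrightarrow>
     norm (rt \<tau> - r \<tau>) \<le> 2 * gap_rate * real \<tau> * \<rho> \<and>
     norm (\<theta>t \<tau> - \<theta> \<tau>) \<le> \<eta> * \<gamma> * (\<epsilon> + \<epsilon>0 + \<beta> * gap_rate * real \<tau>) * real \<tau> * \<rho> \<and>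
     norm (r \<tau>)^2 \<le> (1 + growth_rate)^\<tau> * \<rho>^2"

lemma gap_bounds_Suc:
  assumes "Suc \<tau> \<le> T" "gap_bounds \<tau>"
  shows "gap_bounds (Suc \<tau>)"
proof -
  from assms(2) have r_gap: "norm (rt \<tau> - r \<tau>) \<le> 2 * gap_rate * real \<tau> * \<rho>"
    and theta_gap: "norm (\<theta>t \<tau> - \<theta> \<tau>) \<le> \<eta> * \<gamma> * (\<epsilon> + \<epsilon>0 + \<beta> * gap_rate * real \<tau>) * real \<tau> * \<rho>"
    and r_growth: "norm (r \<tau>)^2 \<le> (1 + growth_rate)^\<tau> * \<rho>^2"
    unfolding gap_bounds_def by auto
  have near: "norm (\<theta> \<tau> - \<theta>0) \<le> R / 2"
    using theta_near_theta0 assms(1) theta_gap by simp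
  then have in_ball: "norm (\<theta> \<tau> - \<theta>0) \<le> R" "norm (\<theta> (Suc \<tau>) - \<theta>0) \<le> R"
    using theta_Suc_in_ball[OF assms(1) near r_gap] norm_ge_zero[of "\<theta> \<tau> - \<theta>0"] by linarith+
  have r_le: "norm (r \<tau>) \<le> 2 * \<rho>"
    using norm_r_le_two_rho assms(1) r_growth by simp
  have "norm (rt (Suc \<tau>) - r (Suc \<tau>)) \<le> 2 * gap_rate * real \<tau> * \<rho> + gap_rate * (2 * \<rho>)"
    using norm_gap_Suc[OF in_ball] r_gap mult_left_mono[OF r_le gap_rate_nonneg] by linarith
  moreover have "\<eta> * \<beta> * \<gamma> * norm (rt \<tau> - r \<tau>) \<le> \<eta> * \<beta> * \<gamma> * (2 * gap_rate * real \<tau> * \<rho>)"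
    using r_gap eta_pos beta_nonneg gamma_nonneg by (simp add: mult_left_mono)
  then have "norm (\<theta>t (Suc \<tau>) - \<theta> (Suc \<tau>))
      \<le> \<eta> * \<gamma> * (\<epsilon> + \<epsilon>0 + \<beta> * gap_rate * real \<tau>) * real \<tau> * \<rho>
        + \<eta> * \<gamma> * (\<epsilon>0 + \<epsilon> / 2) * \<rho> + \<eta> * \<beta> * \<gamma> * (2 * gap_rate * real \<tau> * \<rho>)"
    using norm_theta_gap_Suc[OF in_ball(1)] theta_gap by linarith
  moreover have "0 \<le> \<eta> * \<gamma> * \<rho> * (\<epsilon> / 2 + \<beta> * gap_rate)"
    using eta_pos gamma_nonneg rho_nonneg eps_nonneg beta_nonneg gap_rate_nonneg by simp
  moreover have "(1 + growth_rate) * norm (r \<tau>)^2 \<le> (1 + growth_rate) * ((1 + growth_rate)^\<tau> * \<rho>^2)"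
    using r_growth growth_rate_nonneg by (simp add: mult_left_mono)
  then have "norm (r (Suc \<tau>))^2 \<le> (1 + growth_rate) * ((1 + growth_rate)^\<tau> * \<rho>^2)"
    using norm_r_Suc_sq[OF in_ball] by linarith
  ultimately show ?thesis
    unfolding gap_bounds_def by (simp add: algebra_simps)
qed

lemma gap_bounds: "\<tau> \<le> T \<Longrightarrow> gap_bounds \<tau>"
proof (induction \<tau>)
  case 0
  then show ?case by (simp add: gap_bounds_def r_def rt_def \<rho>_def theta0 thetat0)
next
  case (Suc \<tau>)
  then show ?case using gap_bounds_Suc by simp
qed

end

theorem theorem3p1:
  fixes f :: "real^'N \<Rightarrow> real^'n"
    and Jf :: "real^'N \<Rightarrow> real^'N^'n"
    and A :: "real^'n^'m"
    and J :: "real^'N^'n"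
    and y :: "real^'m"
    and \<theta>0 :: "real^'N"
    and \<theta> \<theta>t :: "nat \<Rightarrow> real^'N"
    and \<gamma> \<eta> \<beta> \<epsilon>0 \<epsilon> R :: real
    and T :: nat
  assumes deriv: "\<And>x. (f has_derivative (\<lambda>h. Jf x *v h)) (at x)"
    and Jcont: "continuous_on UNIV Jf"
    and gamma: "spec_norm A \<le> \<gamma>"
    and eta_pos: "0 < \<eta>"
    and theta0: "\<theta> 0 = \<theta>0"
    and theta_step: "\<And>\<tau>. \<theta> (Suc \<tau>) = \<theta> \<tau> - \<eta> *\<^sub>R (transpose (Jf (\<theta> \<tau>)) *v (transpose A *v (A *v f (\<theta> \<tau>) - y)))"
    and thetat0: "\<theta>t 0 = \<theta>0"
    and thetat_step: "\<And>\<tau>. \<theta>t (Suc \<tau>) = \<theta>t \<tau> - \<eta> *\<^sub>R (transpose J *v (transpose A *v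
           (A *v f \<theta>0 + A *v (J *v (\<theta>t \<tau> - \<theta>0)) - y)))"
    and A1_beta: "\<beta> > 0"
    and A1_J: "spec_norm J \<le> \<beta>"
    and A1_Jf: "\<And>x. spec_norm (Jf x) \<le> \<beta>"
    and A2_pos: "\<epsilon>0 > 0"
    and A2_1: "spec_norm (Jf \<theta>0 - J) \<le> \<epsilon>0"
    and A2_2: "spec_norm (Jf \<theta>0 ** transpose (Jf \<theta>0) - J ** transpose J) \<le> \<epsilon>0 ^ 2"
    and A3_pos: "\<epsilon> > 0" "R > 0"
    and A3: "\<And>x. norm (x - \<theta>0) \<le> R \<Longrightarrow> spec_norm (Jf x - Jf \<theta>0) \<le> \<epsilon> / 2"
    and T_bound: "2 * \<eta> * \<gamma>^2 * \<epsilon>^2 * real T \<le> 1"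
    and eta_bound: "\<eta> * \<beta>^2 * \<gamma>^2 \<le> 1"
    and R_bound: "R \<ge> 2 * norm (A *v f \<theta>0 - y) *
        max (\<eta> * \<gamma> * \<beta> * (1 + 2 * \<eta> * \<gamma>^2 * (\<epsilon>0^2 + \<beta> * \<epsilon>) * real T))
            (sqrt (real T) * (sqrt \<eta> + \<eta> * \<gamma> * sqrt (real T) *
               (\<epsilon> + \<epsilon>0 + \<eta> * \<gamma>^2 * \<beta> * (\<epsilon>0^2 + \<epsilon> * \<beta>) * real T)))"
  shows "\<forall>\<tau>\<le>T.
     norm (\<theta> \<tau> - \<theta>0) \<le> R / 2 \<and>
     norm ((A *v f \<theta>0 + A *v (J *v (\<theta>t \<tau> - \<theta>0)) - y) - (A *v f (\<theta> \<tau>) - y))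
        \<le> 2 * \<eta> * \<gamma>^2 * (\<epsilon>0^2 + \<beta> * \<epsilon>) * real \<tau> * norm (A *v f \<theta>0 - y) \<and>
     norm (\<theta>t \<tau> - \<theta> \<tau>)
        \<le> \<eta> * \<gamma> * (\<epsilon> + \<epsilon>0 + \<eta> * \<gamma>^2 * \<beta> * (\<epsilon>0^2 + \<epsilon> * \<beta>) * real \<tau>) * real \<tau> * norm (A *v f \<theta>0 - y)"
proof -
  have max_bound_split: "c * X \<le> R" "c * Y \<le> R" if "0 \<le> c" "c * max X Y \<le> R" for c X Y :: real
    using that mult_left_mono[OF max.cobounded1, of c X Y] mult_left_mono[OF max.cobounded2, of c Y X]
    by linarith+
  interpret linearized_gradient_descent f Jf A J y \<theta>0 \<theta> \<theta>t \<gamma> \<eta> \<beta> \<epsilon>0 \<epsilon> R T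
    using deriv gamma eta_pos theta0 theta_step thetat0 thetat_step A1_J A1_Jf A2_1 A2_2 A3_pos A3
      eta_bound T_bound max_bound_split[OF _ R_bound]
    by unfold_locales auto
  show ?thesis
    using gap_bounds theta_near_theta0
    unfolding gap_bounds_def beta_gap_rate r_def rt_def \<rho>_def by (auto simp: gap_rate_def mult.assoc)
qed

end
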